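(* In the Riemann problem setting of the context, assume the initial data generate a left shock and a right shock, i.e. $p_*>p_L$ and $p_*>p_R$. Then for all $K,M\in\{L,R\}$: $$|u_*-u_K|<|[\![u]\!]|,\qquad0<p_*-p_K<\big(\gamma\rho_K|[\![u]\!]|+\rho_Ka_K\big)|[\![u]\!]|,$$ $$|\rho_{*K}-\rho_M|<a_K^{-2}\big(\gamma\rho_K|[\![u]\!]|+\rho_Ka_K\big)|[\![u]\!]|+|[\![\rho]\!]|.$$
   Context: Let $\gamma\in(1,2]$. Consider the one-dimensional Riemann problem for the complete Euler equations with left and right primitive states $V_K=(\rho_K,u_K,p_K)$, $\rho_K,p_K>0$, $K=L,R$, sound speeds $a_K=\sqrt{\gamma p_K/\rho_K}$, and jumps $[\![\rho]\!]=\rho_R-\rho_L$, $[\![u]\!]=u_R-u_L$, $[\![p]\!]=p_R-p_L$. For $K=L,R$ define $f_K(p)=(p-p_K)\big(\frac{A_K}{p+B_K}\big)^{1/2}$ if $p>p_K$ and $f_K(p)=\frac{2a_K}{\gamma-1}\big[(p/p_K)^{\frac{\gamma-1}{2\gamma}}-1\big]$ if $p\le p_K$, with $A_K=\frac2{(\gamma+1)\rho_K}$, $B_K=\frac{\gamma-1}{\gamma+1}p_K$. The star pressure $p_*$ solves $f_L(p_* )+f_R(p_* )+u_R-u_L=0$ and $u_*=u_L-f_L(p_* )=u_R+f_R(p_* )$. The $K$-wave is a rarefaction if $p_*\le p_K$, a shock if $p_*>p_K$. The density on the $K$-side of the contact is $\rho_{*K}=\rho_K(p_*/p_K)^{1/\gamma}$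 for a rarefaction and $\rho_{*K}=\rho_K\frac{p_*/p_K+\frac{\gamma-1}{\gamma+1}}{\frac{\gamma-1}{\gamma+1}p_*/p_K+1}$ for a shock. *)

theory Defs
  imports Complex_Main
begin

datatype side = L | R

definition sound_speed :: "real \<Rightarrow> real \<Rightarrow> real \<Rightarrow> real" where
  "sound_speed \<gamma> \<rho> p = sqrt (\<gamma> * p / \<rho>)"

definition A_coef :: "real \<Rightarrow> real \<Rightarrow> real" where
  "A_coef \<gamma> \<rho> = 2 / ((\<gamma> + 1) * \<rho>)"

definition B_coef :: "real \<Rightarrow> real \<Rightarrow> real" where
  "B_coef \<gamma> pK = (\<gamma> - 1) / (\<gamma> + 1) * pK"

text \<open>Toro's pressure function f_K for the state (rho_K, p_K).\<close>
definition f_wave :: "real \<Rightarrow> real \<Rightarrow> real \<Rightarrow> real \<Rightarrow> real" where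
  "f_wave \<gamma> \<rho>K pK p =
     (if p > pK then (p - pK) * sqrt (A_coef \<gamma> \<rho>K / (p + B_coef \<gamma> pK))
      else 2 * sound_speed \<gamma> \<rho>K pK / (\<gamma> - 1) * ((p / pK) powr ((\<gamma> - 1) / (2 * \<gamma>)) - 1))"

text \<open>Density on the K-side of the contact discontinuity.\<close>
definition rho_star :: "real \<Rightarrow> real \<Rightarrow> real \<Rightarrow> real \<Rightarrow> real" where
  "rho_star \<gamma> \<rho>K pK ps =
     (if ps \<le> pK then \<rho>K * (ps / pK) powr (1 / \<gamma>)
      else \<rho>K * (ps / pK + (\<gamma> - 1) / (\<gamma> + 1)) / ((\<gamma> - 1) / (\<gamma> + 1) * (ps / pK) + 1))"

end

theory Submission
  imports Defs
begin

text \<open>For a shock the Rankine--Hugoniot form of f_K gives the quadratic relation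
  2 (p - p_K)^2 = f_K^2 ((\<gamma> + 1) \<rho>_K (p - p_K) + 2 \<rho>_K^2 a_K^2). With two shocks
  |[u]| = f_L + f_R, so f_K < |[u]|, and the relation then confines p_* - p_K below the
  positive root of a quadratic, which is at most (\<gamma> \<rho>_K |[u]| + \<rho>_K a_K) |[u]|.
  Across a shock the density grows, by less than (p_* - p_K)/a_K^2.\<close>

lemma sq_less_imp_less_add:
  fixes q b c :: "'a :: linordered_idom"
  assumes "q\<^sup>2 < b * q + c\<^sup>2" "0 \<le> b" "0 \<le> c"
  shows "q < b + c"
proof (rule ccontr)
  assume "\<not> q < b + c"
  then have "b + c \<le> q" by simp
  then have "b * q + c\<^sup>2 \<le> b * q + c * q"
    using assms(2,3) by (simp add: power2_eq_square mult_left_mono)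
  also have "\<dots> \<le> q\<^sup>2"
    using \<open>b + c \<le> q\<close> assms(2,3)
    by (simp add: power2_eq_square distrib_right [symmetric] mult_right_mono)
  finally show False using assms(1) by simp
qed

lemma sound_speed_pos:
  assumes "0 < \<gamma>" "0 < \<rho>" "0 < pK"
  shows "0 < sound_speed \<gamma> \<rho> pK"
  using assms by (simp add: sound_speed_def)

lemma sound_speed_sq:
  assumes "0 < \<gamma>" "0 < \<rho>" "0 < pK"
  shows "(sound_speed \<gamma> \<rho> pK)\<^sup>2 = \<gamma> * pK / \<rho>"
  using assms by (simp add: sound_speed_def)

lemma f_wave_shock_pos:
  assumes "1 < \<gamma>" "0 < \<rho>" "0 < pK" "pK < p"
  shows "0 < f_wave \<gamma> \<rho> pK p"
  using assms by (simp add: f_wave_def A_coef_def B_coef_def add_pos_pos)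

lemma f_wave_shock_relation:
  assumes "1 < \<gamma>" "0 < \<rho>" "0 < pK" "pK < p"
  shows "2 * (p - pK)\<^sup>2
    = (f_wave \<gamma> \<rho> pK p)\<^sup>2 * ((\<gamma> + 1) * \<rho> * (p - pK) + 2 * \<rho>\<^sup>2 * (sound_speed \<gamma> \<rho> pK)\<^sup>2)"
proof -
  define F where "F = p + B_coef \<gamma> pK"
  have F: "0 < F"
    using assms by (simp add: F_def B_coef_def add_pos_pos)
  have "\<rho>\<^sup>2 * (sound_speed \<gamma> \<rho> pK)\<^sup>2 = \<rho> * \<gamma> * pK"
    using assms sound_speed_sq [of \<gamma> \<rho> pK] by (simp add: power2_eq_square)
  then have "(\<gamma> + 1) * \<rho> * (p - pK) + 2 * \<rho>\<^sup>2 * (sound_speed \<gamma> \<rho> pK)\<^sup>2 = F * ((\<gamma> + 1) * \<rho>)"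
    using assms by (simp add: F_def B_coef_def field_simps)
  moreover have "(f_wave \<gamma> \<rho> pK p)\<^sup>2 = (p - pK)\<^sup>2 * A_coef \<gamma> \<rho> / F"
    using assms F by (simp add: F_def f_wave_def A_coef_def power_mult_distrib)
  ultimately show ?thesis
    using assms F by (simp add: A_coef_def)
qed

lemma shock_pressure_jump_less:
  assumes "1 < \<gamma>" "0 < \<rho>" "0 < pK" "pK < p" and f_less: "f_wave \<gamma> \<rho> pK p < D"
  shows "p - pK < (\<gamma> * \<rho> * D + \<rho> * sound_speed \<gamma> \<rho> pK) * D"
proof -
  define q where "q = p - pK"
  define a where "a = sound_speed \<gamma> \<rho> pK"
  have f_pos: "0 < f_wave \<gamma> \<rho> pK p"
    using assms f_wave_shock_pos by blast
  have D_pos: "0 < D" using f_pos f_less by simp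
  have a_pos: "0 < a" using assms sound_speed_pos a_def by simp
  have "2 * q\<^sup>2 = (f_wave \<gamma> \<rho> pK p)\<^sup>2 * ((\<gamma> + 1) * \<rho> * q + 2 * \<rho>\<^sup>2 * a\<^sup>2)"
    unfolding q_def a_def by (rule f_wave_shock_relation [OF assms(1-4)])
  also have "\<dots> < D\<^sup>2 * ((\<gamma> + 1) * \<rho> * q + 2 * \<rho>\<^sup>2 * a\<^sup>2)"
  proof (rule mult_strict_right_mono)
    show "(f_wave \<gamma> \<rho> pK p)\<^sup>2 < D\<^sup>2"
      using f_pos f_less by (simp add: power_strict_mono)
    show "0 < (\<gamma> + 1) * \<rho> * q + 2 * \<rho>\<^sup>2 * a\<^sup>2"
      using assms q_def a_pos by (simp add: add_pos_pos)
  qed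
  also have "\<dots> = 2 * (((\<gamma> + 1) / 2 * \<rho> * D\<^sup>2) * q + (\<rho> * a * D)\<^sup>2)"
    by (simp add: field_simps power_mult_distrib)
  finally have "q\<^sup>2 < ((\<gamma> + 1) / 2 * \<rho> * D\<^sup>2) * q + (\<rho> * a * D)\<^sup>2"
    by simp
  then have "q < (\<gamma> + 1) / 2 * \<rho> * D\<^sup>2 + \<rho> * a * D"
  proof (rule sq_less_imp_less_add)
    show "0 \<le> (\<gamma> + 1) / 2 * \<rho> * D\<^sup>2" and "0 \<le> \<rho> * a * D"
      using assms a_pos D_pos by simp_all
  qed
  also have "\<dots> \<le> (\<gamma> * \<rho> * D + \<rho> * a) * D"
  proof -
    have "(\<gamma> + 1) / 2 * (\<rho> * D\<^sup>2) \<le> \<gamma> * (\<rho> * D\<^sup>2)"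
      using assms by (intro mult_right_mono) auto
    then show ?thesis by (simp add: algebra_simps power2_eq_square)
  qed
  finally show ?thesis by (simp add: q_def a_def)
qed

lemma rho_star_shock_jump_bounds:
  assumes "1 < \<gamma>" "0 < \<rho>" "0 < pK" "pK < p"
  shows "0 < rho_star \<gamma> \<rho> pK p - \<rho>"
    and "rho_star \<gamma> \<rho> pK p - \<rho> < (p - pK) / (sound_speed \<gamma> \<rho> pK)\<^sup>2"
proof -
  define x where "x = p / pK"
  define b where "b = (\<gamma> - 1) / (\<gamma> + 1)"
  have x: "1 < x" using assms by (simp add: x_def)
  have b: "0 < b" "b < 1" using assms by (simp_all add: b_def)
  have denom: "0 < b * x + 1" using b x by (simp add: add_pos_pos)
  have jump: "rho_star \<gamma> \<rho> pK p - \<rho> = \<rho> * (x - 1) * ((1 - b) / (b * x + 1))"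
    using assms denom unfolding rho_star_def x_def [symmetric] b_def [symmetric]
    by (simp add: field_simps)
  show "0 < rho_star \<gamma> \<rho> pK p - \<rho>"
    using jump assms b x by (simp add: add_pos_pos)
  have "(1 - b) / (b * x + 1) < 1 / \<gamma>"
  proof -
    have "\<gamma> * (1 - b) = b + 1" using assms by (simp add: b_def field_simps)
    also have "\<dots> < b * x + 1" using b x by simp
    finally show ?thesis using assms b x by (simp add: field_simps add_pos_pos)
  qed
  then have "rho_star \<gamma> \<rho> pK p - \<rho> < \<rho> * (x - 1) * (1 / \<gamma>)"
    unfolding jump using assms x by (intro mult_strict_left_mono) auto
  also have "\<dots> = (p - pK) / (sound_speed \<gamma> \<rho> pK)\<^sup>2"
    using assms by (simp add: sound_speed_sq x_def field_simps)
  finally show "rho_star \<gamma> \<rho> pK p - \<rho> < (p - pK) / (sound_speed \<gamma> \<rho> pK)\<^sup>2" .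
qed

theorem lemma3p5:
  fixes \<gamma> :: real and \<rho> u p :: "side \<Rightarrow> real" and ps us :: real
  assumes gamma: "1 < \<gamma>" "\<gamma> \<le> 2"
    and pos: "\<And>K. \<rho> K > 0" "\<And>K. p K > 0"
    and star: "f_wave \<gamma> (\<rho> L) (p L) ps + f_wave \<gamma> (\<rho> R) (p R) ps + u R - u L = 0"
    and ustar: "us = u L - f_wave \<gamma> (\<rho> L) (p L) ps"
    and shocks: "ps > p L" "ps > p R"
  shows "\<forall>K M. \<bar>us - u K\<bar> < \<bar>u R - u L\<bar>
           \<and> 0 < ps - p K
           \<and> ps - p K < (\<gamma> * \<rho> K * \<bar>u R - u L\<bar> + \<rho> K * sound_speed \<gamma> (\<rho> K) (p K)) * \<bar>u R - u L\<bar>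
           \<and> \<bar>rho_star \<gamma> (\<rho> K) (p K) ps - \<rho> M\<bar>
               < (\<gamma> * \<rho> K * \<bar>u R - u L\<bar> + \<rho> K * sound_speed \<gamma> (\<rho> K) (p K)) * \<bar>u R - u L\<bar>
                   / (sound_speed \<gamma> (\<rho> K) (p K))\<^sup>2
                 + \<bar>\<rho> R - \<rho> L\<bar>"
proof -
  define f where "f K = f_wave \<gamma> (\<rho> K) (p K) ps" for K
  define a where "a K = sound_speed \<gamma> (\<rho> K) (p K)" for K
  define D where "D = \<bar>u R - u L\<bar>"
  have shock: "p K < ps" for K
    using shocks by (cases K) auto
  have f_pos: "0 < f K" for K
    unfolding f_def using f_wave_shock_pos [OF gamma(1) pos shock] .
  have D_sum: "D = f L + f R"
    using star f_pos [of L] f_pos [of R] unfolding D_def f_def by simp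
  have u_jump: "\<bar>us - u K\<bar> = f K" for K
    using star ustar f_pos [of L] f_pos [of R] unfolding f_def by (cases K) simp_all
  have f_less: "f K < D" for K
    using D_sum f_pos [of L] f_pos [of R] by (cases K) simp_all
  have p_less: "ps - p K < (\<gamma> * \<rho> K * D + \<rho> K * a K) * D" for K
    using shock_pressure_jump_less [OF gamma(1) pos shock f_less [unfolded f_def]]
    unfolding a_def .
  have rho_less: "\<bar>rho_star \<gamma> (\<rho> K) (p K) ps - \<rho> M\<bar>
      < (\<gamma> * \<rho> K * D + \<rho> K * a K) * D / (a K)\<^sup>2 + \<bar>\<rho> R - \<rho> L\<bar>" for K M
  proof -
    have "\<bar>\<rho> K - \<rho> M\<bar> \<le> \<bar>\<rho> R - \<rho> L\<bar>"
      by (cases K; cases M) simp_all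
    moreover have "(ps - p K) / (a K)\<^sup>2 < (\<gamma> * \<rho> K * D + \<rho> K * a K) * D / (a K)\<^sup>2"
      using p_less sound_speed_pos [OF _ pos, of \<gamma> K K] gamma(1)
      unfolding a_def by (simp add: divide_strict_right_mono)
    ultimately show ?thesis
      using rho_star_shock_jump_bounds [OF gamma(1) pos shock, of K K] unfolding a_def by linarith
  qed
  show ?thesis
    using u_jump f_less shock p_less rho_less unfolding D_def a_def by simp
qed

end
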